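(* Let $\mathfrak g$ be a Lie algebra and $V$ a $\mathfrak g$-module with action $x\cdot u$. Set $\mathbb U_0=\mathfrak g$ (degree 0), $\mathbb U_1=V[-1]$ ($V$ placed in degree 1, odd), and recursively $\mathbb U_{-p+1}=\mathrm{Hom}(\mathbb U_1,\mathbb U_{-p+2})$ for $p\ge2$ (so $\mathbb U_{-1}=\mathrm{Hom}(\mathbb U_1,\mathfrak g)$). Writing $x(u)=x\cdot u$ for $x\in\mathfrak g$, $u\in\mathbb U_1$, define brackets on $\mathbb U_{1-}=\bigoplus_{k\le1}\mathbb U_k$ (for pairs of degrees summing to $\le1$) by the Lie bracket of $\mathfrak g$ on $\mathfrak g\otimes\mathfrak g$ and recursively by $[x,u]=x(u)$, $[u,x]=-(-1)^{|x|}x(u)$, $[x,y](u)=[x,y(u)]+(-1)^{|y|}[x(u),y]$ for $x,y\in\mathbb U_{0-}$ and $u\in\mathbb U_1$. Then $\mathbb U_{1-}$ is a semilocal Lie superalgebra. In particular, for $x\in\mathfrak g$ and $\phi\in\mathbb U_{-1}$, $[x,\phi](u)=[x,\phi(u)]-\phi(x\cdot u)$.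
   Context: All vector spaces are over $\mathbb{K}=\mathbb{R}$ or $\mathbb{C}$, $\mathbb{Z}$-graded, parity equal to degree mod 2; $|x|$ is the degree. A semilocal Lie superalgebra is a graded space concentrated in degrees $\le1$ with bilinear brackets $A_i\otimes A_j\to A_{i+j}$ defined whenever $i+j\le 1$, satisfying $[x,y]=-(-1)^{|x||y|}[y,x]$ and $[x,[y,z]]-(-1)^{|x||y|}[y,[x,z]]=[[x,y],z]$ whenever all brackets involved are defined. *)

theory Defs
  imports Complex_Main
begin

text \<open>UG a is an element of U_0 = g,
  UV u an element of U_1 = V[-1], and UF f an element of some U_{-p} (p >= 1),
  f being a (linear) map from U_1 to U_{-p+1}.  The degree is tracked by the
  carrier sets Ucar below.\<close>
datatype ('g, 'v) U = UG 'g | UV 'v | UF "'v \<Rightarrow> ('g, 'v) U"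

definition psign :: "int \<Rightarrow> 'k::ring_1" where
  "psign k = (if even k then 1 else - 1)"

primrec uscale :: "('k \<Rightarrow> 'g \<Rightarrow> 'g) \<Rightarrow> ('k \<Rightarrow> 'v \<Rightarrow> 'v) \<Rightarrow> 'k \<Rightarrow> ('g, 'v) U \<Rightarrow> ('g, 'v) U" where
  "uscale sg sv c (UG a) = UG (sg c a)"
| "uscale sg sv c (UV w) = UV (sv c w)"
| "uscale sg sv c (UF f) = UF (\<lambda>u. uscale sg sv c (f u))"

primrec uadd :: "('g::plus, 'v::plus) U \<Rightarrow> ('g, 'v) U \<Rightarrow> ('g, 'v) U" where
  "uadd (UG a) y = (case y of UG b \<Rightarrow> UG (a + b) | _ \<Rightarrow> undefined)"
| "uadd (UV a) y = (case y of UV b \<Rightarrow> UV (a + b) | _ \<Rightarrow> undefined)"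
| "uadd (UF f) y = (case y of UF h \<Rightarrow> UF (\<lambda>u. uadd (f u) (h u)) | _ \<Rightarrow> undefined)"

primrec Uneg :: "('k \<Rightarrow> 'g \<Rightarrow> 'g) \<Rightarrow> ('k \<Rightarrow> 'v::plus \<Rightarrow> 'v) \<Rightarrow> nat \<Rightarrow> ('g::plus, 'v) U set" where
  "Uneg sg sv 0 = range UG"
| "Uneg sg sv (Suc p) = {UF f | f. (\<forall>u. f u \<in> Uneg sg sv p)
      \<and> (\<forall>u w. f (u + w) = uadd (f u) (f w))
      \<and> (\<forall>c u. f (sv c u) = uscale sg sv c (f u))}"

definition Ucar :: "('k \<Rightarrow> 'g \<Rightarrow> 'g) \<Rightarrow> ('k \<Rightarrow> 'v::plus \<Rightarrow> 'v) \<Rightarrow> int \<Rightarrow> ('g::plus, 'v) U set" where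
  "Ucar sg sv k = (if k = 1 then range UV else if k \<le> 0 then Uneg sg sv (nat (- k)) else {})"

fun gof :: "('g, 'v) U \<Rightarrow> 'g" where
  "gof (UG a) = a" | "gof _ = undefined"

fun vof :: "('g, 'v) U \<Rightarrow> 'v" where
  "vof (UV u) = u" | "vof _ = undefined"

fun ev :: "('g \<Rightarrow> 'v \<Rightarrow> 'v) \<Rightarrow> ('g, 'v) U \<Rightarrow> 'v \<Rightarrow> ('g, 'v) U" where
  "ev act (UG a) u = UV (act a u)"
| "ev act (UF f) u = f u"
| "ev act (UV w) u = undefined"

function br :: "('k::ring_1 \<Rightarrow> 'g \<Rightarrow> 'g) \<Rightarrow> ('k \<Rightarrow> 'v \<Rightarrow> 'v) \<Rightarrow> ('g \<Rightarrow> 'g \<Rightarrow> 'g)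
    \<Rightarrow> ('g \<Rightarrow> 'v \<Rightarrow> 'v) \<Rightarrow> int \<Rightarrow> int \<Rightarrow> ('g::plus, 'v::plus) U \<Rightarrow> ('g, 'v) U \<Rightarrow> ('g, 'v) U" where
  "br sg sv lb act i j x y =
    (if i = 0 \<and> j = 0 then UG (lb (gof x) (gof y))
     else if i \<le> 0 \<and> j = 1 then ev act x (vof y)
     else if i = 1 \<and> j \<le> 0 then uscale sg sv (- psign j) (ev act y (vof x))
     else if i \<le> 0 \<and> j \<le> 0 then
       UF (\<lambda>u. uadd (br sg sv lb act i (j + 1) x (ev act y u))
                     (uscale sg sv (psign j) (br sg sv lb act (i + 1) j (ev act x u) y)))
     else undefined)"
  by pat_completeness auto
termination
  by (relation "measure (\<lambda>(sg, sv, lb, act, i, j, x, y). nat (2 - i - j))") auto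

end

theory Submission imports Defs begin

(* An element of U_k (k < 0) is a linear map from U_1 to U_(k+1), so it is determined by its
   values at -k vectors, and these values depend linearly on it.  Every identity between brackets
   can therefore be checked after evaluating at some u in U_1.  By the defining recursion
   [x,y](u) = [x,y(u)] + (-1)^|y| [x(u),y], which for x, y in g is just the representation property
   of V, evaluation turns a bilinearity, antisymmetry or Jacobi identity in total degree d into
   identities of the same kind in total degree d + 1.  So all of them follow by induction on
   1 - d, the base cases being the Lie algebra axioms of g and the module axioms of V. *)

declare br.simps [simp del]

fun coord_g :: "'v list \<Rightarrow> ('g::zero, 'v) U \<Rightarrow> 'g" where
  "coord_g [] (UG a) = a"
| "coord_g (u # us) (UF f) = coord_g us (f u)"
| "coord_g _ _ = 0"

fun coord_v :: "'v list \<Rightarrow> ('g, 'v::zero) U \<Rightarrow> 'v" where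
  "coord_v [] (UV w) = w"
| "coord_v (u # us) (UF f) = coord_v us (f u)"
| "coord_v _ _ = 0"

lemma int_induct_downward [case_names nonneg neg]:
  fixes k :: int
  assumes "\<And>k. 0 \<le> k \<Longrightarrow> P k" and "\<And>k. k \<le> -1 \<Longrightarrow> P (k + 1) \<Longrightarrow> P k"
  shows "P k"
proof (induction "nat (- k)" arbitrary: k)
  case 0
  then show ?case using assms(1) by simp
next
  case (Suc n)
  then show ?case using assms(2)[of k] by simp
qed

lemma psign_square: "psign k * psign k = (1 :: 'a :: ring_1)"
  by (simp add: psign_def)

locale graded_spaces =
  G: vector_space sg + V: vector_space sv
  for sg :: "'k::field \<Rightarrow> 'g::ab_group_add \<Rightarrow> 'g"
  and sv :: "'k \<Rightarrow> 'v::ab_group_add \<Rightarrow> 'v"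
begin

abbreviation UC where "UC \<equiv> Ucar sg sv"
abbreviation sc where "sc \<equiv> uscale sg sv"

lemma Ucar_0: "UC 0 = range UG"
  by (simp add: Ucar_def)

lemma Ucar_1: "UC 1 = range UV"
  by (simp add: Ucar_def)

lemma Ucar_nonneg:
  "0 \<le> k \<Longrightarrow> UC k = (if k = 0 then range UG else if k = 1 then range UV else {})"
  by (simp add: Ucar_def)

lemma Ucar_gt1: "1 < k \<Longrightarrow> UC k = {}"
  by (simp add: Ucar_def)

lemma Ucar_neg_iff:
  assumes "k \<le> -1"
  shows "z \<in> UC k \<longleftrightarrow> (\<exists>f. z = UF f \<and> (\<forall>u. f u \<in> UC (k + 1))
    \<and> (\<forall>u w. f (u + w) = uadd (f u) (f w)) \<and> (\<forall>c u. f (sv c u) = sc c (f u)))"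
proof -
  have "nat (- k) = Suc (nat (- (k + 1)))" using assms by simp
  then show ?thesis using assms by (simp add: Ucar_def)
qed

lemma Ucar_negE:
  assumes "k \<le> -1" and "z \<in> UC k"
  obtains f where "z = UF f" "\<And>u. f u \<in> UC (k + 1)"
    "\<And>u w. f (u + w) = uadd (f u) (f w)" "\<And>c u. f (sv c u) = sc c (f u)"
  using Ucar_neg_iff[OF assms(1)] assms(2) by auto

lemma Ucar_eqI:
  assumes "z \<in> UC k" "z' \<in> UC k"
    and "\<And>us. length us = nat (- k) \<Longrightarrow> coord_g us z = coord_g us z' \<and> coord_v us z = coord_v us z'"
  shows "z = z'"
  using assms
proof (induction k arbitrary: z z' rule: int_induct_downward)
  case (nonneg k)
  then show ?case using nonneg(4)[of "[]"] by (auto simp: Ucar_nonneg split: if_splits)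
next
  case (neg k)
  obtain f h where fh: "z = UF f" "z' = UF h" "\<And>u. f u \<in> UC (k + 1)" "\<And>u. h u \<in> UC (k + 1)"
    using neg.prems neg.hyps by (metis Ucar_negE)
  have "f u = h u" for u
  proof (rule neg.IH)
    fix us :: "'v list"
    assume "length us = nat (- (k + 1))"
    then show "coord_g us (f u) = coord_g us (h u) \<and> coord_v us (f u) = coord_v us (h u)"
      using neg.prems(3)[of "u # us"] neg.hyps fh by simp
  qed (use fh in auto)
  then show ?case using fh by auto
qed

lemma coords_uadd:
  assumes "z \<in> UC k" "z' \<in> UC k" "length us = nat (- k)"
  shows "coord_g us (uadd z z') = coord_g us z + coord_g us z'
    \<and> coord_v us (uadd z z') = coord_v us z + coord_v us z'"
  using assms
proof (induction k arbitrary: z z' us rule: int_induct_downward)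
  case (nonneg k)
  then show ?case by (auto simp: Ucar_nonneg split: if_splits)
next
  case (neg k)
  obtain f h where "z = UF f" "z' = UF h" "\<And>u. f u \<in> UC (k + 1)" "\<And>u. h u \<in> UC (k + 1)"
    using neg.prems neg.hyps by (metis Ucar_negE)
  moreover obtain u vs where "us = u # vs" "length vs = nat (- (k + 1))"
    using neg.prems neg.hyps by (cases us) auto
  ultimately show ?case using neg.IH[of "f u" "h u" vs] by simp
qed

lemmas coord_uadd = coords_uadd[THEN conjunct1] coords_uadd[THEN conjunct2]

lemma coords_uscale:
  assumes "z \<in> UC k" "length us = nat (- k)"
  shows "coord_g us (sc c z) = sg c (coord_g us z) \<and> coord_v us (sc c z) = sv c (coord_v us z)"
  using assms
proof (induction k arbitrary: z us rule: int_induct_downward)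
  case (nonneg k)
  then show ?case by (auto simp: Ucar_nonneg split: if_splits)
next
  case (neg k)
  obtain f where "z = UF f" "\<And>u. f u \<in> UC (k + 1)"
    using neg.prems neg.hyps by (metis Ucar_negE)
  moreover obtain u vs where "us = u # vs" "length vs = nat (- (k + 1))"
    using neg.prems neg.hyps by (cases us) auto
  ultimately show ?case using neg.IH[of "f u" vs] by simp
qed

lemmas coord_uscale = coords_uscale[THEN conjunct1] coords_uscale[THEN conjunct2]

lemma Ucar_uadd_uscale_closed:
  assumes "z \<in> UC k" "z' \<in> UC k"
  shows "uadd z z' \<in> UC k \<and> sc c z \<in> UC k"
  using assms
proof (induction k arbitrary: z z' c rule: int_induct_downward)
  case (nonneg k)
  then show ?case by (auto simp: Ucar_nonneg split: if_splits)
next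
  case (neg k)
  obtain f where f: "z = UF f" "\<And>u. f u \<in> UC (k + 1)"
    "\<And>u w. f (u + w) = uadd (f u) (f w)" "\<And>c u. f (sv c u) = sc c (f u)"
    using neg.prems neg.hyps by (metis Ucar_negE)
  obtain h where h: "z' = UF h" "\<And>u. h u \<in> UC (k + 1)"
    "\<And>u w. h (u + w) = uadd (h u) (h w)" "\<And>c u. h (sv c u) = sc c (h u)"
    using neg.prems neg.hyps by (metis Ucar_negE)
  have uadd_closed: "uadd a b \<in> UC (k + 1)" if "a \<in> UC (k + 1)" "b \<in> UC (k + 1)" for a b
    using neg.IH that by blast
  have uscale_closed: "sc c a \<in> UC (k + 1)" if "a \<in> UC (k + 1)" for a c
    using neg.IH that by blast
  note coords = coord_uadd[of _ "k + 1"] coord_uscale[of _ "k + 1"]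
  have "uadd (uadd (f u) (f w)) (uadd (h u) (h w)) = uadd (uadd (f u) (h u)) (uadd (f w) (h w))"
    "uadd (sc d (f u)) (sc d (h u)) = sc d (uadd (f u) (h u))"
    "sc c (uadd (f u) (f w)) = uadd (sc c (f u)) (sc c (f w))"
    "sc c (sc d (f u)) = sc d (sc c (f u))" for u w d
    by (rule Ucar_eqI[of _ "k + 1"]; simp add: f h uadd_closed uscale_closed coords;
        simp add: G.scale_right_distrib V.scale_right_distrib ac_simps)+
  then show ?case using f h uadd_closed uscale_closed Ucar_neg_iff[OF neg.hyps] by simp
qed

lemma uadd_closed: "z \<in> UC k \<Longrightarrow> z' \<in> UC k \<Longrightarrow> uadd z z' \<in> UC k"
  using Ucar_uadd_uscale_closed by blast

lemma uscale_closed: "z \<in> UC k \<Longrightarrow> sc c z \<in> UC k"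
  using Ucar_uadd_uscale_closed by blast

lemma uscale_uadd: "a \<in> UC k \<Longrightarrow> b \<in> UC k \<Longrightarrow> sc c (uadd a b) = uadd (sc c a) (sc c b)"
  by (rule Ucar_eqI[of _ k])
    (simp_all add: uadd_closed uscale_closed coord_uadd[of _ k] coord_uscale[of _ k] G.scale_right_distrib V.scale_right_distrib)

lemma uscale_uscale: "a \<in> UC k \<Longrightarrow> sc c (sc d a) = sc (c * d) a"
  by (rule Ucar_eqI[of _ k]) (simp_all add: uscale_closed coord_uscale[of _ k])

lemma uscale_one: "a \<in> UC k \<Longrightarrow> sc 1 a = a"
  by (rule Ucar_eqI[of _ k]) (simp_all add: uscale_closed coord_uscale[of _ k])

end

locale lie_module = graded_spaces sg sv
  for sg :: "'k::field \<Rightarrow> 'g::ab_group_add \<Rightarrow> 'g" and sv :: "'k \<Rightarrow> 'v::ab_group_add \<Rightarrow> 'v" +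
  fixes lb :: "'g \<Rightarrow> 'g \<Rightarrow> 'g" and act :: "'g \<Rightarrow> 'v \<Rightarrow> 'v"
  assumes lb_add_left: "lb (a + a') b = lb a b + lb a' b"
    and lb_scale_left: "lb (sg c a) b = sg c (lb a b)"
    and lb_add_right: "lb a (b + b') = lb a b + lb a b'"
    and lb_scale_right: "lb a (sg c b) = sg c (lb a b)"
    and lb_self: "lb a a = 0"
    and lb_jacobi: "lb a (lb b d) = lb (lb a b) d + lb b (lb a d)"
    and act_add_left: "act (a + a') u = act a u + act a' u"
    and act_scale_left: "act (sg c a) u = sv c (act a u)"
    and act_add_right: "act a (u + w) = act a u + act a w"
    and act_scale_right: "act a (sv c u) = sv c (act a u)"
    and act_lb: "act (lb a b) u = act a (act b u) - act b (act a u)"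
begin

abbreviation Br where "Br \<equiv> br sg sv lb act"
abbreviation Ev where "Ev \<equiv> ev act"

lemma Ucar_nonpos_cases:
  assumes "x \<in> UC i" "i \<le> 0"
  obtains a where "i = 0" "x = UG a"
  | f where "i \<le> -1" "x = UF f" "\<And>u. f u \<in> UC (i + 1)"
      "\<And>u w. f (u + w) = uadd (f u) (f w)" "\<And>c u. f (sv c u) = sc c (f u)"
proof (cases "i = 0")
  case True
  then show ?thesis using assms that(1) by (auto simp: Ucar_0)
next
  case False
  then have "i \<le> -1" using assms(2) by simp
  then show ?thesis using assms(1) that(2) by (auto elim: Ucar_negE)
qed

lemma Ev_closed: "x \<in> UC i \<Longrightarrow> i \<le> 0 \<Longrightarrow> Ev x u \<in> UC (i + 1)"
  by (cases rule: Ucar_nonpos_cases) (auto simp: Ucar_1)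

lemma Ev_add: "x \<in> UC i \<Longrightarrow> i \<le> 0 \<Longrightarrow> Ev x (u + w) = uadd (Ev x u) (Ev x w)"
  by (cases rule: Ucar_nonpos_cases) (auto simp: act_add_right)

lemma Ev_scale: "x \<in> UC i \<Longrightarrow> i \<le> 0 \<Longrightarrow> Ev x (sv c u) = sc c (Ev x u)"
  by (cases rule: Ucar_nonpos_cases) (auto simp: act_scale_right)

lemma Ev_uadd:
  assumes "x \<in> UC i" "x' \<in> UC i" "i \<le> 0"
  shows "Ev (uadd x x') u = uadd (Ev x u) (Ev x' u)"
  using assms(2,3) by (cases rule: Ucar_nonpos_cases[OF assms(1,3)]; cases rule: Ucar_nonpos_cases)
    (auto simp: act_add_left)

lemma Ev_uscale: "x \<in> UC i \<Longrightarrow> i \<le> 0 \<Longrightarrow> Ev (sc c x) u = sc c (Ev x u)"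
  by (cases rule: Ucar_nonpos_cases) (auto simp: act_scale_left)

lemma Ucar_eq_by_Ev:
  assumes "z \<in> UC k" "z' \<in> UC k" "k \<le> -1" and "\<And>u. Ev z u = Ev z' u"
  shows "z = z'"
proof -
  obtain f h where "z = UF f" "z' = UF h"
    using Ucar_negE[OF assms(3,1)] Ucar_negE[OF assms(3,2)] by metis
  then show ?thesis using assms(4) by auto
qed

lemma br_0_0: "Br 0 0 (UG a) (UG b) = UG (lb a b)"
  by (subst br.simps) simp

lemma br_right_1: "i \<le> 0 \<Longrightarrow> Br i 1 x (UV w) = Ev x w"
  by (subst br.simps) simp

lemma br_left_1: "j \<le> 0 \<Longrightarrow> Br 1 j (UV w) y = sc (- psign j) (Ev y w)"
  by (subst br.simps) simp

lemma br_neg: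
  "i \<le> 0 \<Longrightarrow> j \<le> 0 \<Longrightarrow> i + j < 0 \<Longrightarrow>
    Br i j x y = UF (\<lambda>u. uadd (Br i (j + 1) x (Ev y u)) (sc (psign j) (Br (i + 1) j (Ev x u) y)))"
  by (subst br.simps) simp

definition br_bilinear :: "int \<Rightarrow> int \<Rightarrow> bool" where
  "br_bilinear i j \<longleftrightarrow>
     (\<forall>x\<in>UC i. \<forall>y\<in>UC j. Br i j x y \<in> UC (i + j))
   \<and> (\<forall>x\<in>UC i. \<forall>x'\<in>UC i. \<forall>y\<in>UC j. Br i j (uadd x x') y = uadd (Br i j x y) (Br i j x' y))
   \<and> (\<forall>x\<in>UC i. \<forall>y\<in>UC j. \<forall>c. Br i j (sc c x) y = sc c (Br i j x y))
   \<and> (\<forall>x\<in>UC i. \<forall>y\<in>UC j. \<forall>y'\<in>UC j. Br i j x (uadd y y') = uadd (Br i j x y) (Br i j x y'))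
   \<and> (\<forall>x\<in>UC i. \<forall>y\<in>UC j. \<forall>c. Br i j x (sc c y) = sc c (Br i j x y))"

lemma br_bilinearD:
  assumes "br_bilinear i j"
  shows "x \<in> UC i \<Longrightarrow> y \<in> UC j \<Longrightarrow> Br i j x y \<in> UC (i + j)"
    and "x \<in> UC i \<Longrightarrow> x' \<in> UC i \<Longrightarrow> y \<in> UC j \<Longrightarrow>
      Br i j (uadd x x') y = uadd (Br i j x y) (Br i j x' y)"
    and "x \<in> UC i \<Longrightarrow> y \<in> UC j \<Longrightarrow> Br i j (sc c x) y = sc c (Br i j x y)"
    and "x \<in> UC i \<Longrightarrow> y \<in> UC j \<Longrightarrow> y' \<in> UC j \<Longrightarrow>
      Br i j x (uadd y y') = uadd (Br i j x y) (Br i j x y')"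
    and "x \<in> UC i \<Longrightarrow> y \<in> UC j \<Longrightarrow> Br i j x (sc c y) = sc c (Br i j x y)"
  using assms unfolding br_bilinear_def by blast+

lemma br_bilinear_base:
  assumes "i + j \<le> 1" and "\<not> (i \<le> 0 \<and> j \<le> 0 \<and> i + j < 0)"
  shows "br_bilinear i j"
proof -
  consider "1 < i \<or> 1 < j" | "i = 1" "j \<le> 0" | "i \<le> 0" "j = 1" | "i = 0" "j = 0"
    using assms by linarith
  then show ?thesis
  proof cases
    case 1
    then show ?thesis by (auto simp: br_bilinear_def Ucar_gt1)
  next
    case 2
    have "sc c (Ev y w) \<in> UC (1 + j)" if "y \<in> UC j" for c y w
      using uscale_closed[OF Ev_closed[OF that 2(2)]] by (simp add: add.commute)
    with 2 show ?thesis
      by (auto simp: br_bilinear_def Ucar_1 br_left_1 Ev_closed Ev_add Ev_scale Ev_uadd Ev_uscale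
          uscale_closed uscale_uadd[of _ "j + 1"] uscale_uscale[of _ "j + 1"] mult.commute)
  next
    case 3
    then show ?thesis
      by (auto simp: br_bilinear_def Ucar_1 br_right_1 Ev_closed Ev_add Ev_scale Ev_uadd Ev_uscale)
  next
    case 4
    then show ?thesis
      by (auto simp: br_bilinear_def Ucar_0 br_0_0 lb_add_left lb_add_right lb_scale_left lb_scale_right)
  qed
qed

lemma br_bilinear_step:
  assumes ij: "i \<le> 0" "j \<le> 0" "i + j < 0"
    and right: "br_bilinear i (j + 1)" and left: "br_bilinear (i + 1) j"
  shows "br_bilinear i j"
proof -
  define K where "K = i + j + 1"
  define F where "F x y u = uadd (Br i (j + 1) x (Ev y u)) (sc (psign j) (Br (i + 1) j (Ev x u) y))"
    for x y u
  have Br_eq: "Br i j x y = UF (F x y)" for x y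
    using br_neg[OF ij] by (simp add: F_def[abs_def])
  have right_closed: "Br i (j + 1) x y \<in> UC K" if "x \<in> UC i" "y \<in> UC (j + 1)" for x y
    using br_bilinearD(1)[OF right that] by (simp add: K_def ac_simps)
  have left_closed: "Br (i + 1) j x y \<in> UC K" if "x \<in> UC (i + 1)" "y \<in> UC j" for x y
    using br_bilinearD(1)[OF left that] by (simp add: K_def ac_simps)
  note simps = Ev_closed Ev_add Ev_scale Ev_uadd Ev_uscale uadd_closed uscale_closed right_closed left_closed
    br_bilinearD(2-5)[OF right] br_bilinearD(2-5)[OF left] ij
  note coords = coord_uadd[of _ K] coord_uscale[of _ K]
  have F_closed: "F x y u \<in> UC K" if "x \<in> UC i" "y \<in> UC j" for x y u
    using that by (simp add: F_def simps)
  have F_linear: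
    "F x y (u + w) = uadd (F x y u) (F x y w)"
    "F x y (sv c u) = sc c (F x y u)"
    "F (uadd x x') y u = uadd (F x y u) (F x' y u)"
    "F (sc c x) y u = sc c (F x y u)"
    "F x (uadd y y') u = uadd (F x y u) (F x y' u)"
    "F x (sc c y) u = sc c (F x y u)"
    if "x \<in> UC i" "x' \<in> UC i" "y \<in> UC j" "y' \<in> UC j" for x x' y y' u w c
    by (insert that) (rule Ucar_eqI[of _ K]; simp add: F_def simps coords;
        simp add: G.scale_right_distrib V.scale_right_distrib ac_simps)+
  have "i + j \<le> -1" "i + j + 1 = K" using ij by (simp_all add: K_def)
  then show ?thesis
    unfolding br_bilinear_def using F_closed F_linear by (auto simp: Br_eq Ucar_neg_iff)
qed

lemma br_bilinear_all: "i + j \<le> 1 \<Longrightarrow> br_bilinear i j"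
proof (induction "nat (1 - (i + j))" arbitrary: i j rule: less_induct)
  case less
  show ?case
  proof (cases "i \<le> 0 \<and> j \<le> 0 \<and> i + j < 0")
    case True
    then show ?thesis
      using less.hyps[of i "j + 1"] less.hyps[of "i + 1" j] by (auto intro: br_bilinear_step)
  next
    case False
    then show ?thesis using less.prems by (rule br_bilinear_base[rotated])
  qed
qed

(* The degree k is a separate variable so that the simplifier can use this rule whatever form
   the degree takes in the goal. *)
lemma br_closed: "x \<in> UC i \<Longrightarrow> y \<in> UC j \<Longrightarrow> i + j \<le> 1 \<Longrightarrow> i + j = k \<Longrightarrow> Br i j x y \<in> UC k"
  using br_bilinearD(1)[OF br_bilinear_all] by blast

lemma br_uadd_left: "x \<in> UC i \<Longrightarrow> x' \<in> UC i \<Longrightarrow> y \<in> UC j \<Longrightarrow> i + j \<le> 1 \<Longrightarrow>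
    Br i j (uadd x x') y = uadd (Br i j x y) (Br i j x' y)"
  using br_bilinearD(2)[OF br_bilinear_all] .

lemma br_uscale_left: "x \<in> UC i \<Longrightarrow> y \<in> UC j \<Longrightarrow> i + j \<le> 1 \<Longrightarrow>
    Br i j (sc c x) y = sc c (Br i j x y)"
  using br_bilinearD(3)[OF br_bilinear_all] .

lemma br_uadd_right: "x \<in> UC i \<Longrightarrow> y \<in> UC j \<Longrightarrow> y' \<in> UC j \<Longrightarrow> i + j \<le> 1 \<Longrightarrow>
    Br i j x (uadd y y') = uadd (Br i j x y) (Br i j x y')"
  using br_bilinearD(4)[OF br_bilinear_all] .

lemma br_uscale_right: "x \<in> UC i \<Longrightarrow> y \<in> UC j \<Longrightarrow> i + j \<le> 1 \<Longrightarrow>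
    Br i j x (sc c y) = sc c (Br i j x y)"
  using br_bilinearD(5)[OF br_bilinear_all] .

(* In degree (0, 0) this is the representation property act_lb. *)
lemma Ev_br:
  assumes "x \<in> UC i" "y \<in> UC j" "i \<le> 0" "j \<le> 0"
  shows "Ev (Br i j x y) u = uadd (Br i (j + 1) x (Ev y u)) (sc (psign j) (Br (i + 1) j (Ev x u) y))"
proof (cases "i = 0 \<and> j = 0")
  case True
  with assms obtain a b where "x = UG a" "y = UG b" by (auto simp: Ucar_0)
  with True show ?thesis by (simp add: br_0_0 br_right_1 br_left_1 psign_def act_lb)
next
  case False
  with assms have "i + j < 0" by linarith
  with assms show ?thesis by (simp add: br_neg)
qed

lemmas sign_simps = psign_def G.scale_right_distrib V.scale_right_distrib

lemma lb_antisym: "lb a b = - lb b a"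
proof -
  have "lb (a + b) (a + b) = lb a a + lb a b + (lb b a + lb b b)"
    by (simp add: lb_add_left lb_add_right)
  then show ?thesis by (simp add: lb_self eq_neg_iff_add_eq_0)
qed

lemma br_antisym_step:
  assumes ij: "i \<le> 0" "j \<le> 0" "i + j < 0" and x: "x \<in> UC i" and y: "y \<in> UC j"
    and IH: "\<And>x y. x \<in> UC i \<Longrightarrow> y \<in> UC (j + 1) \<Longrightarrow>
        Br i (j + 1) x y = sc (- psign (i * (j + 1))) (Br (j + 1) i y x)"
      "\<And>x y. x \<in> UC (i + 1) \<Longrightarrow> y \<in> UC j \<Longrightarrow>
        Br (i + 1) j x y = sc (- psign ((i + 1) * j)) (Br j (i + 1) y x)"
  shows "Br i j x y = sc (- psign (i * j)) (Br j i y x)"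
proof (rule Ucar_eq_by_Ev)
  show "Br i j x y \<in> UC (i + j)" "sc (- psign (i * j)) (Br j i y x) \<in> UC (i + j)" "i + j \<le> -1"
    using ij x y by (simp_all add: br_closed uscale_closed)
  fix u
  define K where "K = i + j + 1"
  have closed: "Br (j + 1) i (Ev y u) x \<in> UC K" "Br j (i + 1) y (Ev x u) \<in> UC K"
    using ij x y by (simp_all add: br_closed Ev_closed K_def)
  show "Ev (Br i j x y) u = Ev (sc (- psign (i * j)) (Br j i y x)) u"
    using ij x y closed
    apply (simp add: Ev_br Ev_uscale[OF br_closed[OF _ _ _ refl]] IH Ev_closed)
    apply (rule Ucar_eqI[of _ K])
      apply (simp_all add: uadd_closed uscale_closed coord_uadd[of _ K] coord_uscale[of _ K])
    apply (auto simp: sign_simps)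
    done
qed

lemma br_antisym:
  "i + j \<le> 1 \<Longrightarrow> x \<in> UC i \<Longrightarrow> y \<in> UC j \<Longrightarrow> Br i j x y = sc (- psign (i * j)) (Br j i y x)"
proof (induction "nat (1 - (i + j))" arbitrary: i j x y rule: less_induct)
  case less
  consider "1 < i \<or> 1 < j" | "i = 1" "j \<le> 0" | "i \<le> 0" "j = 1" | "i = 0" "j = 0"
    | "i \<le> 0" "j \<le> 0" "i + j < 0"
    using less.prems(1) by linarith
  then show ?case
  proof cases
    case 1
    with less.prems show ?thesis by (auto simp: Ucar_gt1)
  next
    case 2
    with less.prems show ?thesis by (auto simp: Ucar_1 br_left_1 br_right_1)
  next
    case 3
    with less.prems obtain w where "y = UV w" by (auto simp: Ucar_1)
    moreover have "Ev x w \<in> UC (i + 1)" using 3 less.prems by (simp add: Ev_closed)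
    ultimately show ?thesis
      using 3 by (simp add: br_left_1 br_right_1 uscale_uscale psign_square uscale_one)
  next
    case 4
    with less.prems obtain a b where "x = UG a" "y = UG b" by (auto simp: Ucar_0)
    with 4 show ?thesis by (simp add: br_0_0 psign_def lb_antisym[of a b])
  next
    case 5
    show ?thesis
    proof (rule br_antisym_step)
      show "Br i (j + 1) x' y' = sc (- psign (i * (j + 1))) (Br (j + 1) i y' x')"
        if "x' \<in> UC i" "y' \<in> UC (j + 1)" for x' y'
        using less.hyps[of i "j + 1" x' y'] 5 that by simp
      show "Br (i + 1) j x' y' = sc (- psign ((i + 1) * j)) (Br j (i + 1) y' x')"
        if "x' \<in> UC (i + 1)" "y' \<in> UC j" for x' y'
        using less.hyps[of "i + 1" j x' y'] 5 that by simp
    qed (use 5 less.prems in auto)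
  qed
qed

definition jacobi_at :: "int \<Rightarrow> int \<Rightarrow> int \<Rightarrow> bool" where
  "jacobi_at i j k \<longleftrightarrow> (\<forall>x\<in>UC i. \<forall>y\<in>UC j. \<forall>z\<in>UC k.
     uadd (Br i (j + k) x (Br j k y z)) (sc (- psign (i * j)) (Br j (i + k) y (Br i k x z)))
       = Br (i + j) k (Br i j x y) z)"

lemmas closed_simps = br_closed uadd_closed uscale_closed Ev_closed
lemmas linear_simps = br_uadd_left br_uadd_right br_uscale_left br_uscale_right Ev_uadd Ev_uscale

lemma jacobi_at_right_1:
  assumes "i \<le> 0" "j \<le> 0"
  shows "jacobi_at i j 1"
  unfolding jacobi_at_def
proof (intro ballI)
  fix x y z assume x: "x \<in> UC i" and y: "y \<in> UC j" and z: "z \<in> UC 1"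
  obtain w where w: "z = UV w" using z by (auto simp: Ucar_1)
  define K where "K = i + j + 1"
  have "Br (i + 1) j (Ev x w) y = sc (- psign ((i + 1) * j)) (Br j (i + 1) y (Ev x w))"
    using assms x y by (intro br_antisym) (simp_all add: Ev_closed)
  with assms x y show "uadd (Br i (j + 1) x (Br j 1 y z)) (sc (- psign (i * j)) (Br j (i + 1) y (Br i 1 x z)))
      = Br (i + j) 1 (Br i j x y) z"
    apply (simp add: w br_right_1 Ev_br)
    apply (rule Ucar_eqI[of _ K])
      apply (simp_all add: closed_simps coord_uadd[of _ K] coord_uscale[of _ K] K_def)
    apply (auto simp: sign_simps)
    done
qed

lemma jacobi_at_middle_1:
  assumes "i \<le> 0" "k \<le> 0" "i + k \<le> 0"
  shows "jacobi_at i 1 k"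
  unfolding jacobi_at_def
proof (intro ballI)
  fix x y z assume x: "x \<in> UC i" and y: "y \<in> UC 1" and z: "z \<in> UC k"
  obtain w where w: "y = UV w" using y by (auto simp: Ucar_1)
  define K where "K = i + k + 1"
  have e: "1 + k = k + 1" "i * 1 = i" by simp_all
  from assms x z show "uadd (Br i (1 + k) x (Br 1 k y z)) (sc (- psign (i * 1)) (Br 1 (i + k) y (Br i k x z)))
      = Br (i + 1) k (Br i 1 x y) z"
    unfolding w e
    apply (simp add: br_right_1 br_left_1 Ev_br closed_simps linear_simps)
    apply (rule Ucar_eqI[of _ K])
      apply (simp_all add: closed_simps coord_uadd[of _ K] coord_uscale[of _ K] K_def)
    apply (auto simp: sign_simps)
    done
qed

lemma jacobi_at_left_1:
  assumes "j \<le> 0" "k \<le> 0" "j + k \<le> 0"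
  shows "jacobi_at 1 j k"
  unfolding jacobi_at_def
proof (intro ballI)
  fix x y z assume x: "x \<in> UC 1" and y: "y \<in> UC j" and z: "z \<in> UC k"
  obtain w where w: "x = UV w" using x by (auto simp: Ucar_1)
  define K where "K = j + k + 1"
  have e: "1 + k = k + 1" "1 + j = j + 1" "1 * j = j" by simp_all
  from assms y z show "uadd (Br 1 (j + k) x (Br j k y z)) (sc (- psign (1 * j)) (Br j (1 + k) y (Br 1 k x z)))
      = Br (1 + j) k (Br 1 j x y) z"
    unfolding w e
    apply (simp add: br_left_1 Ev_br closed_simps linear_simps)
    apply (rule Ucar_eqI[of _ K])
      apply (simp_all add: closed_simps coord_uadd[of _ K] coord_uscale[of _ K] K_def)
    apply (auto simp: sign_simps)
    done
qed

lemma jacobi_at_0_0_0: "jacobi_at 0 0 0"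
  unfolding jacobi_at_def Ucar_0 by (clarsimp simp: br_0_0 psign_def) (metis lb_jacobi add_diff_cancel)

lemma jacobi_at_step:
  assumes neg: "i \<le> 0" "j \<le> 0" "k \<le> 0" "i + j + k \<le> -1"
    and IH: "jacobi_at i j (k + 1)" "jacobi_at i (j + 1) k" "jacobi_at (i + 1) j k"
  shows "jacobi_at i j k"
  unfolding jacobi_at_def
proof (intro ballI)
  fix x y z assume x: "x \<in> UC i" and y: "y \<in> UC j" and z: "z \<in> UC k"
  define S where "S = i + j + k"
  define K where "K = i + j + k + 1"
  show "uadd (Br i (j + k) x (Br j k y z)) (sc (- psign (i * j)) (Br j (i + k) y (Br i k x z))) =
        Br (i + j) k (Br i j x y) z"
  proof (rule Ucar_eq_by_Ev[of _ S])
    show "uadd (Br i (j + k) x (Br j k y z)) (sc (- psign (i * j)) (Br j (i + k) y (Br i k x z))) \<in> UC S"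
      "Br (i + j) k (Br i j x y) z \<in> UC S" "S \<le> -1"
      using neg x y z by (simp_all add: S_def closed_simps)
    fix w
    have eqs: "j + (k + 1) = j + k + 1" "i + (k + 1) = i + k + 1" "j + 1 + k = j + k + 1"
      "i + 1 + k = i + k + 1" "i + (j + 1) = i + j + 1" "i + 1 + j = i + j + 1" by simp_all
    have J1: "uadd (Br i (j + k + 1) x (Br j (k + 1) y (Ev z w)))
        (sc (- psign (i * j)) (Br j (i + k + 1) y (Br i (k + 1) x (Ev z w))))
       = Br (i + j) (k + 1) (Br i j x y) (Ev z w)"
      using IH(1) x y z neg unfolding jacobi_at_def eqs by (simp add: Ev_closed)
    have J2: "uadd (Br i (j + k + 1) x (Br (j + 1) k (Ev y w) z))
        (sc (- psign (i * (j + 1))) (Br (j + 1) (i + k) (Ev y w) (Br i k x z)))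
       = Br (i + j + 1) k (Br i (j + 1) x (Ev y w)) z"
      using IH(2) x y z neg unfolding jacobi_at_def eqs by (simp add: Ev_closed)
    have J3: "uadd (Br (i + 1) (j + k) (Ev x w) (Br j k y z))
        (sc (- psign ((i + 1) * j)) (Br j (i + k + 1) y (Br (i + 1) k (Ev x w) z)))
       = Br (i + j + 1) k (Br (i + 1) j (Ev x w) y) z"
      using IH(3) x y z neg unfolding jacobi_at_def eqs by (simp add: Ev_closed)
    show "Ev (uadd (Br i (j + k) x (Br j k y z)) (sc (- psign (i * j)) (Br j (i + k) y (Br i k x z)))) w =
          Ev (Br (i + j) k (Br i j x y) z) w"
      using neg x y z
      apply (simp add: Ev_uadd[where i = S] Ev_uscale[where i = S] S_def Ev_br closed_simps linear_simps
          J1[symmetric] J2[symmetric] J3[symmetric])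
      apply (rule Ucar_eqI[of _ K])
        apply (simp_all add: closed_simps coord_uadd[of _ K] coord_uscale[of _ K] K_def)
      apply (auto simp: sign_simps)
      done
  qed
qed

lemma jacobi_at_all:
  "i + j \<le> 1 \<Longrightarrow> j + k \<le> 1 \<Longrightarrow> i + k \<le> 1 \<Longrightarrow> i + j + k \<le> 1 \<Longrightarrow> jacobi_at i j k"
proof (induction "nat (1 - (i + j + k))" arbitrary: i j k rule: less_induct)
  case less
  consider "1 < i \<or> 1 < j \<or> 1 < k" | "i = 1" | "j = 1" | "k = 1" | "i = 0" "j = 0" "k = 0"
    | "i \<le> 0" "j \<le> 0" "k \<le> 0" "i + j + k \<le> -1"
    using less.prems by linarith
  then show ?case
  proof cases
    case 1
    then show ?thesis by (auto simp: jacobi_at_def Ucar_gt1)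
  next
    case 2
    then show ?thesis using jacobi_at_left_1 less.prems by simp
  next
    case 3
    then show ?thesis using jacobi_at_middle_1 less.prems by simp
  next
    case 4
    then show ?thesis using jacobi_at_right_1 less.prems by simp
  next
    case 5
    then show ?thesis using jacobi_at_0_0_0 by simp
  next
    case 6
    have "jacobi_at i j (k + 1)" "jacobi_at i (j + 1) k" "jacobi_at (i + 1) j k"
      using 6 less.prems by (auto intro!: less.hyps)
    with 6 show ?thesis by (blast intro: jacobi_at_step)
  qed
qed

lemma br_jacobi:
  assumes "i + j \<le> 1" "j + k \<le> 1" "i + k \<le> 1" "i + j + k \<le> 1"
    and "x \<in> UC i" "y \<in> UC j" "z \<in> UC k"
  shows "uadd (Br i (j + k) x (Br j k y z)) (sc (- psign (i * j)) (Br j (i + k) y (Br i k x z)))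
    = Br (i + j) k (Br i j x y) z"
  using jacobi_at_all[OF assms(1-4), unfolded jacobi_at_def] assms(5-7) by simp

lemma Ev_br_0_neg1:
  assumes "\<phi> \<in> UC (-1)"
  shows "Ev (Br 0 (-1) (UG a) \<phi>) u = uadd (Br 0 0 (UG a) (Ev \<phi> u)) (sc (-1) (Ev \<phi> (act a u)))"
proof -
  have "Ev \<phi> v \<in> UC 0" for v using Ev_closed[OF assms] by simp
  then show ?thesis
    using assms by (simp add: Ev_br Ucar_0 br_left_1 psign_def uscale_one[of _ 0])
qed

end

lemma lie_module_if_linear:
  assumes "vector_space sv"
    and "\<And>b. Vector_Spaces.linear sg sg (\<lambda>a. lb a b)" "\<And>a. Vector_Spaces.linear sg sg (lb a)"
    and "\<And>a. lb a a = 0" "\<And>a b c. lb a (lb b c) = lb (lb a b) c + lb b (lb a c)"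
    and "\<And>u. Vector_Spaces.linear sg sv (\<lambda>a. act a u)" "\<And>a. Vector_Spaces.linear sv sv (act a)"
    and "\<And>a b u. act (lb a b) u = act a (act b u) - act b (act a u)"
  shows "lie_module sg sv lb act"
  by (intro lie_module.intro graded_spaces.intro lie_module_axioms.intro;
      (rule assms(1,4,5,8) | simp add: assms(2,3,6,7)[unfolded Vector_Spaces.linear_iff]))

theorem proposition4p6:
  fixes sg :: "'k::field_char_0 \<Rightarrow> 'g::ab_group_add \<Rightarrow> 'g"
    and sv :: "'k \<Rightarrow> 'v::ab_group_add \<Rightarrow> 'v"
    and lb :: "'g \<Rightarrow> 'g \<Rightarrow> 'g"
    and act :: "'g \<Rightarrow> 'v \<Rightarrow> 'v"
  assumes V_vs: "vector_space sv"
    and lb_lin1: "\<And>b. Vector_Spaces.linear sg sg (\<lambda>a. lb a b)"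
    and lb_lin2: "\<And>a. Vector_Spaces.linear sg sg (lb a)"
    and lb_alt: "\<And>a. lb a a = 0"
    and lb_jacobi: "\<And>a b c. lb a (lb b c) = lb (lb a b) c + lb b (lb a c)"
    and act_lin1: "\<And>u. Vector_Spaces.linear sg sv (\<lambda>a. act a u)"
    and act_lin2: "\<And>a. Vector_Spaces.linear sv sv (act a)"
    and act_rep: "\<And>a b u. act (lb a b) u = act a (act b u) - act b (act a u)"
  shows
    "(\<forall>i j x y. i + j \<le> 1 \<longrightarrow> x \<in> Ucar sg sv i \<longrightarrow> y \<in> Ucar sg sv j \<longrightarrow>
        br sg sv lb act i j x y \<in> Ucar sg sv (i + j))
   \<and> (\<forall>i j x x' y c. i + j \<le> 1 \<longrightarrow> x \<in> Ucar sg sv i \<longrightarrow> x' \<in> Ucar sg sv i \<longrightarrow> y \<in> Ucar sg sv j \<longrightarrow>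
        br sg sv lb act i j (uadd x x') y = uadd (br sg sv lb act i j x y) (br sg sv lb act i j x' y)
      \<and> br sg sv lb act i j (uscale sg sv c x) y = uscale sg sv c (br sg sv lb act i j x y))
   \<and> (\<forall>i j x y y' c. i + j \<le> 1 \<longrightarrow> x \<in> Ucar sg sv i \<longrightarrow> y \<in> Ucar sg sv j \<longrightarrow> y' \<in> Ucar sg sv j \<longrightarrow>
        br sg sv lb act i j x (uadd y y') = uadd (br sg sv lb act i j x y) (br sg sv lb act i j x y')
      \<and> br sg sv lb act i j x (uscale sg sv c y) = uscale sg sv c (br sg sv lb act i j x y))
   \<and> (\<forall>i j x y. i + j \<le> 1 \<longrightarrow> x \<in> Ucar sg sv i \<longrightarrow> y \<in> Ucar sg sv j \<longrightarrow>
        br sg sv lb act i j x y = uscale sg sv (- psign (i * j)) (br sg sv lb act j i y x))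
   \<and> (\<forall>i j k x y z. i + j \<le> 1 \<longrightarrow> j + k \<le> 1 \<longrightarrow> i + k \<le> 1 \<longrightarrow> i + j + k \<le> 1 \<longrightarrow>
        x \<in> Ucar sg sv i \<longrightarrow> y \<in> Ucar sg sv j \<longrightarrow> z \<in> Ucar sg sv k \<longrightarrow>
        uadd (br sg sv lb act i (j + k) x (br sg sv lb act j k y z))
             (uscale sg sv (- psign (i * j)) (br sg sv lb act j (i + k) y (br sg sv lb act i k x z)))
        = br sg sv lb act (i + j) k (br sg sv lb act i j x y) z)
   \<and> (\<forall>a \<phi> u. \<phi> \<in> Ucar sg sv (-1) \<longrightarrow>
        ev act (br sg sv lb act 0 (-1) (UG a) \<phi>) u
        = uadd (br sg sv lb act 0 0 (UG a) (ev act \<phi> u)) (uscale sg sv (-1) (ev act \<phi> (act a u))))"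
proof -
  interpret lie_module sg sv lb act
    by (rule lie_module_if_linear) (fact assms)+
  show ?thesis
    by (blast intro: br_closed br_uadd_left br_uscale_left br_uadd_right br_uscale_right br_antisym
        br_jacobi Ev_br_0_neg1)
qed

end
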